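(* Let $S$ be an $E$-solid locally inverse semigroup, $\rho$ an inverse semigroup congruence on $S$ whose idempotent classes are completely simple subsemigroups, $T=S/\rho$, and $\mathcal C$ the derived semigroupoid. For every arrow $a$ of $\mathcal C$ there is a unique stable arrow $b$ of $\mathcal C$ with $b\le a$.
   Context: The derived semigroupoid $\mathcal C$ has object set $T$ and arrows $\mathcal C(\alpha,\beta)=\{(\alpha,s,\beta)\in T\times S\times T:\alpha\cdot s\rho=\beta,\ \beta\cdot(s\rho)^{-1}=\alpha\}$, composition $(\alpha,s,\beta)\circ(\beta,t,\gamma)=(\alpha,st,\gamma)$. An arrow $(\alpha,s,\beta)$ is stable if $s\rho=\alpha^{-1}\beta$. The natural partial order on $\mathcal C$: $(\alpha,s,\beta)\le(\gamma,t,\delta)$ iff $\alpha=\gamma$, $\beta=\delta$ and $s\le t$ in the natural partial order of $S$ ($s\le t$ iff $s=et=tf$ for some idempotents $e,f$). Locally inverse: regular with every $eSe$ inverse; $E$-solid: idempotent-generated subsemigroup completely regular. *)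

theory Defs
  imports Main
begin

(* S is the whole type 'a with an associative multiplication. *)

definition idem :: "'a::semigroup_mult \<Rightarrow> bool" where
  "idem e \<longleftrightarrow> e * e = e"

definition natle :: "'a::semigroup_mult \<Rightarrow> 'a \<Rightarrow> bool" where
  "natle s t \<longleftrightarrow> (\<exists>e f. idem e \<and> idem f \<and> s = e * t \<and> s = t * f)"

definition regular_sg :: "'a::semigroup_mult itself \<Rightarrow> bool" where
  "regular_sg _ \<longleftrightarrow> (\<forall>a::'a. \<exists>x. a * x * a = a)"

definition inverse_sg_on :: "'b set \<Rightarrow> ('b \<Rightarrow> 'b \<Rightarrow> 'b) \<Rightarrow> bool" where
  "inverse_sg_on U m \<longleftrightarrow> (\<forall>a\<in>U. \<forall>b\<in>U. m a b \<in> U) \<and>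
     (\<forall>a\<in>U. \<exists>!b. b \<in> U \<and> m (m a b) a = a \<and> m (m b a) b = b)"

definition locally_inverse :: "'a::semigroup_mult itself \<Rightarrow> bool" where
  "locally_inverse T \<longleftrightarrow> regular_sg T \<and>
     (\<forall>e::'a. idem e \<longrightarrow> inverse_sg_on {e * s * e | s. True} (*))"

inductive_set gen_sg :: "'a::semigroup_mult set \<Rightarrow> 'a set" for A where
  base: "a \<in> A \<Longrightarrow> a \<in> gen_sg A"
| mult: "a \<in> gen_sg A \<Longrightarrow> b \<in> gen_sg A \<Longrightarrow> a * b \<in> gen_sg A"

definition completely_regular_on :: "'a::semigroup_mult set \<Rightarrow> bool" where
  "completely_regular_on U \<longleftrightarrow> (\<forall>a\<in>U. \<forall>b\<in>U. a * b \<in> U) \<and>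
     (\<forall>a\<in>U. \<exists>x\<in>U. a * x * a = a \<and> x * a * x = x \<and> a * x = x * a)"

definition E_solid :: "'a::semigroup_mult itself \<Rightarrow> bool" where
  "E_solid _ \<longleftrightarrow> completely_regular_on (gen_sg {e::'a. idem e})"

(* completely simple subsemigroup: simple (no proper two-sided ideals) and with a primitive idempotent *)
definition completely_simple_on :: "'a::semigroup_mult set \<Rightarrow> bool" where
  "completely_simple_on U \<longleftrightarrow> U \<noteq> {} \<and> (\<forall>a\<in>U. \<forall>b\<in>U. a * b \<in> U) \<and>
     (\<forall>a\<in>U. \<forall>b\<in>U. b = a \<or> (\<exists>x\<in>U. b = x * a) \<or> (\<exists>y\<in>U. b = a * y)
                      \<or> (\<exists>x\<in>U. \<exists>y\<in>U. b = x * a * y)) \<and>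
     (\<exists>e\<in>U. idem e \<and> (\<forall>f\<in>U. idem f \<and> f = e * f \<and> f = f * e \<longrightarrow> f = e))"

definition congruence :: "('a::semigroup_mult \<times> 'a) set \<Rightarrow> bool" where
  "congruence \<rho> \<longleftrightarrow> equiv UNIV \<rho> \<and>
     (\<forall>a b c. (a, b) \<in> \<rho> \<longrightarrow> (c * a, c * b) \<in> \<rho> \<and> (a * c, b * c) \<in> \<rho>)"

definition Tset :: "('a::semigroup_mult \<times> 'a) set \<Rightarrow> 'a set set" where
  "Tset \<rho> = UNIV // \<rho>"

definition cls :: "('a::semigroup_mult \<times> 'a) set \<Rightarrow> 'a \<Rightarrow> 'a set" where
  "cls \<rho> s = \<rho> `` {s}"

definition tmult :: "('a::semigroup_mult \<times> 'a) set \<Rightarrow> 'a set \<Rightarrow> 'a set \<Rightarrow> 'a set" where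
  "tmult \<rho> A B = \<rho> `` {(SOME a. a \<in> A) * (SOME b. b \<in> B)}"

definition tinv :: "('a::semigroup_mult \<times> 'a) set \<Rightarrow> 'a set \<Rightarrow> 'a set" where
  "tinv \<rho> A = (THE B. B \<in> Tset \<rho> \<and> tmult \<rho> (tmult \<rho> A B) A = A
                     \<and> tmult \<rho> (tmult \<rho> B A) B = B)"

definition inverse_congruence :: "('a::semigroup_mult \<times> 'a) set \<Rightarrow> bool" where
  "inverse_congruence \<rho> \<longleftrightarrow> congruence \<rho> \<and> inverse_sg_on (Tset \<rho>) (tmult \<rho>)"

definition is_arrow :: "('a::semigroup_mult \<times> 'a) set \<Rightarrow> 'a set \<times> 'a \<times> 'a set \<Rightarrow> bool" where
  "is_arrow \<rho> x = (case x of (\<alpha>, s, \<beta>) \<Rightarrow>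
     \<alpha> \<in> Tset \<rho> \<and> \<beta> \<in> Tset \<rho> \<and> tmult \<rho> \<alpha> (cls \<rho> s) = \<beta>
     \<and> tmult \<rho> \<beta> (tinv \<rho> (cls \<rho> s)) = \<alpha>)"

definition stable_arrow :: "('a::semigroup_mult \<times> 'a) set \<Rightarrow> 'a set \<times> 'a \<times> 'a set \<Rightarrow> bool" where
  "stable_arrow \<rho> x = (case x of (\<alpha>, s, \<beta>) \<Rightarrow> cls \<rho> s = tmult \<rho> (tinv \<rho> \<alpha>) \<beta>)"

definition arrow_le :: "'a::semigroup_mult set \<times> 'a \<times> 'a set \<Rightarrow> 'a set \<times> 'a \<times> 'a set \<Rightarrow> bool" where
  "arrow_le x y = (case x of (\<alpha>, s, \<beta>) \<Rightarrow> case y of (\<gamma>, t, \<delta>) \<Rightarrow>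
     \<alpha> = \<gamma> \<and> \<beta> = \<delta> \<and> natle s t)"

end

theory Submission
  imports Defs
begin

(* Write a = (\<alpha>, s, \<beta>) with \<alpha> = [p], and let s', p' be inverses of s, p.  The elements
   below s are the products h s with h an idempotent of the local submonoid g S g, g = s s',
   and (\<alpha>, h s, \<beta>) is a stable arrow as soon as [h] = [p' p].
   Existence: the idempotent class [p' p] lies below [g] in the inverse semigroup T, and being
   completely simple it contains an idempotent f; an inverse x of g f g in the inverse semigroup
   g S g gives the idempotent h = (g f g) x with [h] = [f].
   Uniqueness: two such idempotents commute, since g S g is inverse, and lie in one completely
   simple class, all of whose idempotents are primitive; hence they coincide. *)

locale inverse_semigroup_on =
  fixes U :: "'b set" and m :: "'b \<Rightarrow> 'b \<Rightarrow> 'b" (infixl "\<cdot>" 70)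
  assumes inverse_sg: "inverse_sg_on U m"
    and assoc: "x \<in> U \<Longrightarrow> y \<in> U \<Longrightarrow> z \<in> U \<Longrightarrow> x \<cdot> y \<cdot> z = x \<cdot> (y \<cdot> z)"
begin

lemma closed: "x \<in> U \<Longrightarrow> y \<in> U \<Longrightarrow> x \<cdot> y \<in> U"
  using inverse_sg unfolding inverse_sg_on_def by blast

lemma inverse_exists:
  assumes "a \<in> U"
  obtains b where "b \<in> U" "a \<cdot> b \<cdot> a = a" "b \<cdot> a \<cdot> b = b"
  using assms inverse_sg unfolding inverse_sg_on_def by blast

lemma inverse_unique:
  assumes "a \<in> U" "b \<in> U" "c \<in> U"
    and "a \<cdot> b \<cdot> a = a" "b \<cdot> a \<cdot> b = b" "a \<cdot> c \<cdot> a = a" "c \<cdot> a \<cdot> c = c"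
  shows "b = c"
  using assms inverse_sg unfolding inverse_sg_on_def by blast

lemma idem_mult_idem:
  assumes e: "e \<in> U" "e \<cdot> e = e" and f: "f \<in> U" "f \<cdot> f = f"
  shows "e \<cdot> f \<cdot> (e \<cdot> f) = e \<cdot> f"
proof -
  have ef: "e \<cdot> f \<in> U" using closed e f by blast
  obtain x where x: "x \<in> U" "e \<cdot> f \<cdot> x \<cdot> (e \<cdot> f) = e \<cdot> f" "x \<cdot> (e \<cdot> f) \<cdot> x = x"
    using inverse_exists[OF ef] by blast
  have ee: "e \<cdot> (e \<cdot> z) = e \<cdot> z" and ff: "f \<cdot> (f \<cdot> z) = f \<cdot> z" if "z \<in> U" for z
    using assoc[OF e(1) e(1) that] assoc[OF f(1) f(1) that] e f by simp_all
  have x1: "e \<cdot> (f \<cdot> (x \<cdot> (e \<cdot> f))) = e \<cdot> f" and x2: "x \<cdot> (e \<cdot> (f \<cdot> x)) = x"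
    using x by (simp_all add: assoc closed e f)
  have x2': "x \<cdot> (e \<cdot> (f \<cdot> (x \<cdot> z))) = x \<cdot> z" if "z \<in> U" for z
    using x2 that by (metis assoc closed e(1) f(1) x(1))
  \<comment> \<open>f x e is a second inverse of e f\<close>
  have fxe: "f \<cdot> x \<cdot> e = x"
  proof (rule inverse_unique[OF ef _ x(1) _ _ x(2,3)])
    show "f \<cdot> x \<cdot> e \<in> U" using closed e f x(1) by blast
    show "e \<cdot> f \<cdot> (f \<cdot> x \<cdot> e) \<cdot> (e \<cdot> f) = e \<cdot> f"
      by (simp add: assoc closed e f x(1) ee ff x1)
    show "f \<cdot> x \<cdot> e \<cdot> (e \<cdot> f) \<cdot> (f \<cdot> x \<cdot> e) = f \<cdot> x \<cdot> e"
      by (simp add: assoc closed e f x(1) ee ff x2')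
  qed
  have "x \<cdot> x = f \<cdot> (x \<cdot> (e \<cdot> (f \<cdot> x))) \<cdot> e"
    by (subst (1 2) fxe[symmetric]) (simp add: assoc closed e f x(1))
  then have xx: "x \<cdot> x = x" using x2 fxe by simp
  have "x \<cdot> x \<cdot> x = x" using xx by simp
  then show ?thesis
    using inverse_unique[OF x(1) ef x(1) x(3,2)] xx by simp
qed

lemma idem_commute:
  assumes e: "e \<in> U" "e \<cdot> e = e" and f: "f \<in> U" "f \<cdot> f = f"
  shows "e \<cdot> f = f \<cdot> e"
proof (rule inverse_unique[of "e \<cdot> f"])
  show "e \<cdot> f \<in> U" "e \<cdot> f \<in> U" "f \<cdot> e \<in> U" using closed e f by blast+
  have ef: "e \<cdot> f \<cdot> (e \<cdot> f) = e \<cdot> f" and fe: "f \<cdot> e \<cdot> (f \<cdot> e) = f \<cdot> e"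
    using idem_mult_idem e f by blast+
  then show "e \<cdot> f \<cdot> (e \<cdot> f) \<cdot> (e \<cdot> f) = e \<cdot> f" "e \<cdot> f \<cdot> (e \<cdot> f) \<cdot> (e \<cdot> f) = e \<cdot> f"
    by simp_all
  have ee: "e \<cdot> (e \<cdot> z) = e \<cdot> z" and ff: "f \<cdot> (f \<cdot> z) = f \<cdot> z" if "z \<in> U" for z
    using assoc[OF e(1) e(1) that] assoc[OF f(1) f(1) that] e f by simp_all
  show "e \<cdot> f \<cdot> (f \<cdot> e) \<cdot> (e \<cdot> f) = e \<cdot> f"
    using ef by (simp add: assoc closed e f ee ff)
  show "f \<cdot> e \<cdot> (e \<cdot> f) \<cdot> (f \<cdot> e) = f \<cdot> e"
    using fe by (simp add: assoc closed e f ee ff)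
qed

end

lemma completely_simple_on_idem_primitive:
  fixes U :: "'a::semigroup_mult set"
  assumes cs: "completely_simple_on U"
    and h: "h \<in> U" "h * h = h" and k: "k \<in> U" "k * k = k" and hk: "h * k = k" "k * h = k"
  shows "k = h"
proof -
  obtain e where e: "e \<in> U" "e * e = e"
    and primitive: "\<And>f. f \<in> U \<Longrightarrow> f * f = f \<Longrightarrow> f = e * f \<Longrightarrow> f = f * e \<Longrightarrow> f = e"
    using cs unfolding completely_simple_on_def idem_def by blast
  have closed: "\<And>a b. a \<in> U \<Longrightarrow> b \<in> U \<Longrightarrow> a * b \<in> U"
    using cs unfolding completely_simple_on_def by blast
  have ee: "e * (e * z) = e * z" for z using e(2) by (simp add: mult.assoc[symmetric])
  have "h = e \<or> (\<exists>x\<in>U. h = x * e) \<or> (\<exists>y\<in>U. h = e * y) \<or> (\<exists>x\<in>U. \<exists>y\<in>U. h = x * e * y)"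
    using cs e(1) h(1) unfolding completely_simple_on_def by blast
  then obtain x y where xy: "x \<in> U" "y \<in> U" "h = x * e * y"
  proof (elim disjE bexE)
    show "h = e \<Longrightarrow> thesis" using that[of e e] e by simp
    show "x \<in> U \<Longrightarrow> h = x * e \<Longrightarrow> thesis" for x using that[of x e] e by (simp add: mult.assoc)
    show "y \<in> U \<Longrightarrow> h = e * y \<Longrightarrow> thesis" for y using that[of e y] e by simp
    show "x \<in> U \<Longrightarrow> y \<in> U \<Longrightarrow> h = x * e * y \<Longrightarrow> thesis" for x y using that by blast
  qed
  \<comment> \<open>with h = u v, u e = u and e v = v, the idempotent v k u lies below the primitive e\<close>
  define u where "u = h * x * e"
  define v where "v = e * y * h"
  have "u * v = h * (x * e * y) * h" unfolding u_def v_def by (simp add: mult.assoc ee)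
  then have uv: "u * v = h" using xy(3) h(2) by simp
  then have uv': "u * (v * z) = h * z" for z by (simp add: mult.assoc[symmetric])
  have ue: "u * e = u" and ev: "e * v = v" unfolding u_def v_def by (simp_all add: mult.assoc ee e(2))
  have kk: "k * (k * z) = k * z" and hk': "h * (k * z) = k * z" for z
    using k(2) hk(1) by (simp_all add: mult.assoc[symmetric])
  have "v * k * u = e"
  proof (rule primitive)
    show "v * k * u \<in> U" unfolding u_def v_def by (intro closed xy(1,2) e(1) h(1) k(1))
    show "v * k * u * (v * k * u) = v * k * u" by (simp add: mult.assoc uv' hk' kk)
    show "v * k * u = e * (v * k * u)" using ev by (simp add: mult.assoc[symmetric])
    show "v * k * u = v * k * u * e" using ue by (simp add: mult.assoc)
  qed
  have "k = u * (v * k * u) * v" by (simp add: mult.assoc uv uv' hk)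
  also have "\<dots> = h" using \<open>v * k * u = e\<close> ue uv by simp
  finally show ?thesis .
qed

lemma completely_simple_on_commuting_idem_eq:
  fixes U :: "'a::semigroup_mult set"
  assumes cs: "completely_simple_on U"
    and h: "h \<in> U" "h * h = h" and k: "k \<in> U" "k * k = k" and comm: "h * k = k * h"
  shows "h = k"
proof -
  have hkU: "h * k \<in> U" using cs h k unfolding completely_simple_on_def by blast
  have hk: "h * k * (h * k) = h * k" by (metis comm h(2) k(2) mult.assoc)
  have "h * (h * k) = h * k" "h * k * h = h * k" by (metis comm h(2) mult.assoc)+
  then have "h * k = h" by (rule completely_simple_on_idem_primitive[OF cs h hkU hk])
  have "k * (h * k) = h * k" "h * k * k = h * k" by (metis comm k(2) mult.assoc)+
  then have "h * k = k" by (rule completely_simple_on_idem_primitive[OF cs k hkU hk])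
  with \<open>h * k = h\<close> show ?thesis by simp
qed

lemma regular_sg_mutual_inverse:
  fixes s :: "'a::semigroup_mult"
  assumes "regular_sg TYPE('a)"
  obtains s' where "s * s' * s = s" "s' * s * s' = s'"
proof -
  obtain x where x: "s * x * s = s" using assms unfolding regular_sg_def by blast
  have "s * (x * s * x) * s = s" "x * s * x * s * (x * s * x) = x * s * x"
    using x by (metis mult.assoc)+
  then show ?thesis by (rule that)
qed

lemma natle_factor:
  assumes "natle t s" and s: "s * s' * s = s" "s' * s * s' = s'"
  obtains h where "h * h = h" "s * s' * h = h" "h * (s * s') = h" "t = h * s"
proof -
  obtain e f where e: "e * e = e" and f: "f * f = f" and te: "t = e * s" and tf: "t = s * f"
    using assms(1) unfolding natle_def idem_def by blast
  define h where "h = s * f * s'"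
  have "t * s' * s = t" using te s(1) by (metis mult.assoc)
  then have th: "t = h * s" using tf unfolding h_def by (simp add: mult.assoc)
  have "s * f * s' * s = s * f" using th tf unfolding h_def by simp
  then have "h * h = h" using f unfolding h_def by (metis mult.assoc)
  moreover have "s * s' * h = h" "h * (s * s') = h" using s unfolding h_def by (metis mult.assoc)+
  ultimately show ?thesis using th that by blast
qed

lemma natle_idem_mult:
  assumes "h * h = h" "s * s' * h = h"
  shows "natle (h * s) s"
  unfolding natle_def idem_def
proof (intro exI conjI)
  show "h * h = h" by (fact assms(1))
  show "s' * h * s * (s' * h * s) = s' * h * s" using assms by (metis mult.assoc)
  show "h * s = h * s" ..
  show "h * s = s * (s' * h * s)" using assms(2) by (metis mult.assoc)
qed

lemma locally_inverse_local_submonoid: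
  assumes "locally_inverse TYPE('a::semigroup_mult)" "g * g = (g::'a)"
  shows "inverse_semigroup_on {g * x * g | x. True} (*)"
  using assms unfolding locally_inverse_def idem_def
  by unfold_locales (auto simp: mult.assoc)

lemma locally_inverse_local_idem_commute:
  assumes li: "locally_inverse TYPE('a::semigroup_mult)" and g: "g * g = (g::'a)"
    and h: "h * h = h" "g * h = h" "h * g = h" and k: "k * k = k" "g * k = k" "k * g = k"
  shows "h * k = k * h"
proof -
  interpret inverse_semigroup_on "{g * x * g | x. True}" "(*)"
    using locally_inverse_local_submonoid[OF li g] .
  have "h \<in> {g * x * g | x. True}" "k \<in> {g * x * g | x. True}"
    using h k by (metis (mono_tags, lifting) mem_Collect_eq)+
  then show ?thesis using idem_commute h(1) k(1) by blast
qed

lemma cls_eq_iff: "congruence \<rho> \<Longrightarrow> cls \<rho> a = cls \<rho> b \<longleftrightarrow> (a, b) \<in> \<rho>"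
  unfolding cls_def congruence_def using eq_equiv_class_iff[of UNIV \<rho> a b] by simp

lemma mem_cls_iff: "congruence \<rho> \<Longrightarrow> x \<in> cls \<rho> a \<longleftrightarrow> cls \<rho> x = cls \<rho> a"
  using cls_eq_iff[of \<rho> a x] unfolding cls_def by auto

lemma cls_in_Tset: "cls \<rho> a \<in> Tset \<rho>"
  unfolding cls_def Tset_def by (rule quotientI) simp

lemma Tset_cases:
  assumes "A \<in> Tset \<rho>"
  obtains a where "A = cls \<rho> a"
  using assms unfolding cls_def Tset_def by (auto elim: quotientE)

lemma cls_mult_cong:
  assumes c: "congruence \<rho>" and "cls \<rho> a = cls \<rho> b" "cls \<rho> x = cls \<rho> y"
  shows "cls \<rho> (a * x) = cls \<rho> (b * y)"
proof -
  have "(a, b) \<in> \<rho>" "(x, y) \<in> \<rho>" using assms cls_eq_iff[OF c] by blast+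
  then have "(a * x, b * x) \<in> \<rho>" "(b * x, b * y) \<in> \<rho>" using c unfolding congruence_def by blast+
  then have "(a * x, b * y) \<in> \<rho>" using c unfolding congruence_def equiv_def by (meson transE)
  then show ?thesis using cls_eq_iff[OF c] by blast
qed

lemma tmult_cls:
  assumes c: "congruence \<rho>"
  shows "tmult \<rho> (cls \<rho> a) (cls \<rho> b) = cls \<rho> (a * b)"
proof -
  have "cls \<rho> (SOME x. x \<in> cls \<rho> z) = cls \<rho> z" for z
    using someI[of "\<lambda>x. x \<in> cls \<rho> z" z] mem_cls_iff[OF c] by metis
  then show ?thesis unfolding tmult_def cls_def[symmetric] by (intro cls_mult_cong[OF c])
qed

lemma inverse_congruence_quotient:
  assumes "inverse_congruence \<rho>"
  shows "inverse_semigroup_on (Tset \<rho>) (tmult \<rho>)"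
proof
  have c: "congruence \<rho>" using assms unfolding inverse_congruence_def by blast
  show "inverse_sg_on (Tset \<rho>) (tmult \<rho>)" using assms unfolding inverse_congruence_def by blast
  fix A B C assume "A \<in> Tset \<rho>" "B \<in> Tset \<rho>" "C \<in> Tset \<rho>"
  then show "tmult \<rho> (tmult \<rho> A B) C = tmult \<rho> A (tmult \<rho> B C)"
    by (elim Tset_cases) (simp add: tmult_cls[OF c] mult.assoc)
qed

lemma tinv_cls:
  assumes ic: "inverse_congruence \<rho>" and s: "s * s' * s = s" "s' * s * s' = s'"
  shows "tinv \<rho> (cls \<rho> s) = cls \<rho> s'"
proof -
  interpret T: inverse_semigroup_on "Tset \<rho>" "tmult \<rho>"
    using inverse_congruence_quotient[OF ic] .
  have c: "congruence \<rho>" using ic unfolding inverse_congruence_def by blast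
  have inverse: "tmult \<rho> (tmult \<rho> (cls \<rho> s) (cls \<rho> s')) (cls \<rho> s) = cls \<rho> s"
    "tmult \<rho> (tmult \<rho> (cls \<rho> s') (cls \<rho> s)) (cls \<rho> s') = cls \<rho> s'"
    using s by (simp_all add: tmult_cls[OF c])
  show ?thesis unfolding tinv_def
  proof (rule the_equality)
    show "cls \<rho> s' \<in> Tset \<rho> \<and> tmult \<rho> (tmult \<rho> (cls \<rho> s) (cls \<rho> s')) (cls \<rho> s) = cls \<rho> s
      \<and> tmult \<rho> (tmult \<rho> (cls \<rho> s') (cls \<rho> s)) (cls \<rho> s') = cls \<rho> s'"
      using inverse cls_in_Tset by blast
    fix B assume "B \<in> Tset \<rho> \<and> tmult \<rho> (tmult \<rho> (cls \<rho> s) B) (cls \<rho> s) = cls \<rho> s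
      \<and> tmult \<rho> (tmult \<rho> B (cls \<rho> s)) B = B"
    then show "B = cls \<rho> s'"
      using T.inverse_unique[OF cls_in_Tset _ cls_in_Tset _ _ inverse] by blast
  qed
qed

lemma cls_idem_commute:
  assumes ic: "inverse_congruence \<rho>"
    and "cls \<rho> (e * e) = cls \<rho> e" "cls \<rho> (f * f) = cls \<rho> f"
  shows "cls \<rho> (e * f) = cls \<rho> (f * e)"
proof -
  interpret T: inverse_semigroup_on "Tset \<rho>" "tmult \<rho>"
    using inverse_congruence_quotient[OF ic] .
  have c: "congruence \<rho>" using ic unfolding inverse_congruence_def by blast
  show ?thesis
    using T.idem_commute[of "cls \<rho> e" "cls \<rho> f"] assms(2,3)
    by (simp add: tmult_cls[OF c] cls_in_Tset)
qed

lemma is_arrow_cls_iff: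
  assumes ic: "inverse_congruence \<rho>" and s: "s * s' * s = s" "s' * s * s' = s'"
  shows "is_arrow \<rho> (cls \<rho> p, s, \<beta>) \<longleftrightarrow> \<beta> = cls \<rho> (p * s) \<and> cls \<rho> (p * s * s') = cls \<rho> p"
proof -
  have c: "congruence \<rho>" using ic unfolding inverse_congruence_def by blast
  show ?thesis
    unfolding is_arrow_def using tinv_cls[OF ic s] by (auto simp: tmult_cls[OF c] cls_in_Tset)
qed

lemma idem_below_in_cls:
  fixes \<rho> :: "('a::semigroup_mult \<times> 'a) set"
  assumes li: "locally_inverse TYPE('a)" and ic: "inverse_congruence \<rho>"
    and g: "g * g = g" and f: "f * f = f" and fg: "cls \<rho> (f * g) = cls \<rho> f"
  obtains h where "h * h = h" "g * h = h" "h * g = h" "cls \<rho> h = cls \<rho> f"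
proof -
  interpret T: inverse_semigroup_on "Tset \<rho>" "tmult \<rho>"
    using inverse_congruence_quotient[OF ic] .
  interpret G: inverse_semigroup_on "{g * x * g | x. True}" "(*)"
    using locally_inverse_local_submonoid[OF li g] .
  have c: "congruence \<rho>" using ic unfolding inverse_congruence_def by blast
  have gf: "cls \<rho> (g * f) = cls \<rho> f"
    using cls_idem_commute[OF ic, of g f] g f fg by simp
  define z where "z = g * f * g"
  have cz: "cls \<rho> z = cls \<rho> f"
    using cls_mult_cong[OF c gf refl, of g] fg unfolding z_def by simp
  have "z \<in> {g * x * g | x. True}" unfolding z_def by blast
  then obtain x where x: "x \<in> {g * x * g | x. True}" "z * x * z = z" "x * z * x = x"
    by (rule G.inverse_exists)
  have zz: "cls \<rho> (z * z) = cls \<rho> z" using cls_mult_cong[OF c cz cz] f cz by simp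
  have cx: "cls \<rho> x = cls \<rho> z"
  proof (rule T.inverse_unique[OF cls_in_Tset cls_in_Tset cls_in_Tset])
    show "tmult \<rho> (tmult \<rho> (cls \<rho> z) (cls \<rho> x)) (cls \<rho> z) = cls \<rho> z"
      "tmult \<rho> (tmult \<rho> (cls \<rho> x) (cls \<rho> z)) (cls \<rho> x) = cls \<rho> x"
      using x by (simp_all add: tmult_cls[OF c])
    show "tmult \<rho> (tmult \<rho> (cls \<rho> z) (cls \<rho> z)) (cls \<rho> z) = cls \<rho> z"
      "tmult \<rho> (tmult \<rho> (cls \<rho> z) (cls \<rho> z)) (cls \<rho> z) = cls \<rho> z"
      using zz by (simp_all add: tmult_cls[OF c])
  qed
  show ?thesis
  proof
    show "z * x * (z * x) = z * x" using x(2) by (metis mult.assoc)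
    show "g * (z * x) = z * x" using g unfolding z_def by (metis mult.assoc)
    show "z * x * g = z * x" using x(1) g by (auto simp: mult.assoc)
    show "cls \<rho> (z * x) = cls \<rho> f" using cls_mult_cong[OF c refl cx, of z] zz cz by simp
  qed
qed

lemma cls_inj_on_natle_below:
  fixes \<rho> :: "('a::semigroup_mult \<times> 'a) set"
  assumes li: "locally_inverse TYPE('a)" and ic: "inverse_congruence \<rho>"
    and cs: "\<forall>\<alpha>\<in>Tset \<rho>. tmult \<rho> \<alpha> \<alpha> = \<alpha> \<longrightarrow> completely_simple_on \<alpha>"
  shows "inj_on (cls \<rho>) {t. natle t s}"
proof (rule inj_onI)
  fix t u assume "t \<in> {t. natle t s}" "u \<in> {t. natle t s}" and tu: "cls \<rho> t = cls \<rho> u"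
  then have t: "natle t s" and u: "natle u s" by simp_all
  have c: "congruence \<rho>" using ic unfolding inverse_congruence_def by blast
  have reg: "regular_sg TYPE('a)" using li unfolding locally_inverse_def by blast
  obtain s' where s: "s * s' * s = s" "s' * s * s' = s'" using reg by (rule regular_sg_mutual_inverse)
  obtain h where h: "h * h = h" "s * s' * h = h" "h * (s * s') = h" and th: "t = h * s"
    using natle_factor[OF t s] .
  obtain k where k: "k * k = k" "s * s' * k = k" "k * (s * s') = k" and uk: "u = k * s"
    using natle_factor[OF u s] .
  have "h = t * s'" "k = u * s'" using h(3) th k(3) uk by (simp_all add: mult.assoc)
  then have hk: "cls \<rho> h = cls \<rho> k" using cls_mult_cong[OF c tu refl] by simp
  have "s * s' * (s * s') = s * s'" using s(1) by (metis mult.assoc)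
  then have comm: "h * k = k * h"
    using locally_inverse_local_idem_commute[OF li _ h(1,2) _ k(1,2)] h(3) k(3) by simp
  have "tmult \<rho> (cls \<rho> h) (cls \<rho> h) = cls \<rho> h" using h(1) by (simp add: tmult_cls[OF c])
  then have "completely_simple_on (cls \<rho> h)" using cs cls_in_Tset by blast
  moreover have "h \<in> cls \<rho> h" "k \<in> cls \<rho> h" using hk mem_cls_iff[OF c] by simp_all
  ultimately have "h = k" using completely_simple_on_commuting_idem_eq h(1) k(1) comm by blast
  then show "t = u" using th uk by simp
qed

lemma stable_arrow_below_exists:
  fixes \<rho> :: "('a::semigroup_mult \<times> 'a) set"
  assumes li: "locally_inverse TYPE('a)" and ic: "inverse_congruence \<rho>"
    and cs: "\<forall>\<alpha>\<in>Tset \<rho>. tmult \<rho> \<alpha> \<alpha> = \<alpha> \<longrightarrow> completely_simple_on \<alpha>"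
    and a: "is_arrow \<rho> (\<alpha>, s, \<beta>)"
  obtains t where "natle t s" "is_arrow \<rho> (\<alpha>, t, \<beta>)" "stable_arrow \<rho> (\<alpha>, t, \<beta>)"
proof -
  have c: "congruence \<rho>" using ic unfolding inverse_congruence_def by blast
  have reg: "regular_sg TYPE('a)" using li unfolding locally_inverse_def by blast
  obtain p where \<alpha>: "\<alpha> = cls \<rho> p"
    using a unfolding is_arrow_def by (auto elim: Tset_cases)
  obtain s' where s: "s * s' * s = s" "s' * s * s' = s'" using reg by (rule regular_sg_mutual_inverse)
  obtain p' where p: "p * p' * p = p" "p' * p * p' = p'" using reg by (rule regular_sg_mutual_inverse)
  have \<beta>: "\<beta> = cls \<rho> (p * s)" and pg: "cls \<rho> (p * (s * s')) = cls \<rho> p"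
    using a is_arrow_cls_iff[OF ic s] unfolding \<alpha> by (simp_all add: mult.assoc)
  have "p' * p * (p' * p) = p' * p" using p(1) by (metis mult.assoc)
  then have "tmult \<rho> (cls \<rho> (p' * p)) (cls \<rho> (p' * p)) = cls \<rho> (p' * p)"
    by (simp add: tmult_cls[OF c])
  then have "completely_simple_on (cls \<rho> (p' * p))" using cs cls_in_Tset by blast
  then obtain f where "f \<in> cls \<rho> (p' * p)" and f: "f * f = f"
    unfolding completely_simple_on_def idem_def by blast
  then have cf: "cls \<rho> f = cls \<rho> (p' * p)" using mem_cls_iff[OF c] by blast
  have fg: "cls \<rho> (f * (s * s')) = cls \<rho> f"
    using cls_mult_cong[OF c cf refl, of "s * s'"] cls_mult_cong[OF c refl pg, of p'] cf
    by (simp add: mult.assoc)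
  have g: "s * s' * (s * s') = s * s'" using s(1) by (metis mult.assoc)
  obtain h where h: "h * h = h" "s * s' * h = h" "h * (s * s') = h" and "cls \<rho> h = cls \<rho> f"
    using idem_below_in_cls[OF li ic g f fg] .
  with cf have ch: "cls \<rho> h = cls \<rho> (p' * p)" by simp
  have hh: "h * (h * z) = h * z" and hg: "h * (s * (s' * z)) = h * z" for z
    using h by (metis mult.assoc)+
  have t: "h * s * (s' * h) * (h * s) = h * s" "s' * h * (h * s) * (s' * h) = s' * h"
    by (simp_all add: mult.assoc hh hg h(1))
  have cp: "cls \<rho> (p * h) = cls \<rho> p"
    using cls_mult_cong[OF c refl ch, of p] p(1) by (simp add: mult.assoc)
  show ?thesis
  proof
    show "natle (h * s) s" using natle_idem_mult h(1,2) .
    have "cls \<rho> (p * (h * s)) = cls \<rho> (p * s)"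
      using cls_mult_cong[OF c cp refl, of s] by (simp add: mult.assoc)
    moreover have "cls \<rho> (p * (h * s) * (s' * h)) = cls \<rho> p"
      using cp by (simp add: mult.assoc hg h(1))
    ultimately show "is_arrow \<rho> (\<alpha>, h * s, \<beta>)"
      unfolding \<alpha> \<beta> is_arrow_cls_iff[OF ic t] by (simp add: mult.assoc)
    show "stable_arrow \<rho> (\<alpha>, h * s, \<beta>)"
      using cls_mult_cong[OF c ch refl, of s] tinv_cls[OF ic p]
      unfolding stable_arrow_def \<alpha> \<beta> by (simp add: tmult_cls[OF c] mult.assoc)
  qed
qed

theorem lemma5p3:
  fixes \<rho> :: "('a::semigroup_mult \<times> 'a) set"
  assumes "E_solid TYPE('a)"
    and "locally_inverse TYPE('a)"
    and "inverse_congruence \<rho>"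
    and "\<forall>\<alpha>\<in>Tset \<rho>. tmult \<rho> \<alpha> \<alpha> = \<alpha> \<longrightarrow> completely_simple_on \<alpha>"
    and "is_arrow \<rho> a"
  shows "\<exists>!b. is_arrow \<rho> b \<and> stable_arrow \<rho> b \<and> arrow_le b a"
proof -
  obtain \<alpha> s \<beta> where a: "a = (\<alpha>, s, \<beta>)" by (cases a)
  obtain t where t: "natle t s" "is_arrow \<rho> (\<alpha>, t, \<beta>)" "stable_arrow \<rho> (\<alpha>, t, \<beta>)"
    using stable_arrow_below_exists[OF assms(2-4)] assms(5) unfolding a by blast
  show ?thesis
  proof (rule ex1I)
    show "is_arrow \<rho> (\<alpha>, t, \<beta>) \<and> stable_arrow \<rho> (\<alpha>, t, \<beta>) \<and> arrow_le (\<alpha>, t, \<beta>) a"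
      using t unfolding a arrow_le_def by simp
    fix b assume b: "is_arrow \<rho> b \<and> stable_arrow \<rho> b \<and> arrow_le b a"
    then obtain u where bu: "b = (\<alpha>, u, \<beta>)" and u: "natle u s"
      unfolding a arrow_le_def by (auto split: prod.splits)
    have "cls \<rho> u = cls \<rho> t" using b t(3) unfolding bu stable_arrow_def by simp
    then show "b = (\<alpha>, t, \<beta>)"
      using inj_onD[OF cls_inj_on_natle_below[OF assms(2-4)]] u t(1) bu by simp
  qed
qed

end
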